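(* Let $L$ be a split regular Hom-Lie color algebra with symmetric root system $\Lambda$. Then: (1) for every $\alpha\in\Lambda$, $L_{\Lambda_\alpha}=H_{\Lambda_\alpha}\oplus V_{\Lambda_\alpha}$ is an ideal of $L$; (2) if $L$ is simple, then every $\alpha\in\Lambda$ is connected to every $\beta\in\Lambda$, and $H=\sum_{\alpha\in\Lambda}[L_\alpha,L_{-\alpha}]$.
   Context: Let $\mathbb{K}$ be a field and $\Gamma$ an abelian group. A bi-character is $\varepsilon:\Gamma\times\Gamma\to\mathbb{K}\setminus\{0\}$ with $\varepsilon(a,b)\varepsilon(b,a)=1$, $\varepsilon(a,b+c)=\varepsilon(a,b)\varepsilon(a,c)$, $\varepsilon(a+b,c)=\varepsilon(a,c)\varepsilon(b,c)$. A Hom-Lie color algebra $(L,[\cdot,\cdot],\phi,\varepsilon)$ is a $\Gamma$-graded space $L=\bigoplus_gL_g$ with bilinear $[\cdot,\cdot]$, $[L_g,L_h]\subset L_{g+h}$, linear $\phi$ with $\phi(L_g)\subset L_g$, $\phi([x,y])=[\phi x,\phi y]$, such that for homogeneous $x,y,z$ of degrees $\bar x,\bar y,\bar z$: $[x,y]=-\varepsilon(\bar x,\bar y)[y,x]$ and $\varepsilon(\bar z,\bar x)[\phi(x),[y,z]]+\varepsilon(\bar x,\bar y)[\phi(y),[z,x]]+\varepsilon(\bar y,\bar z)[\phi(z),[x,y]]=0$; regular means $\phi$ bijective. A subalgebra is a graded subspace $A$ with $[A,A]\subset A$, $\phi(A)=A$; abelian if $[A,A]=0$. An ideal is a graded subspace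 $I$ with $[I,L]\subset I$ and $\phi(I)=I$. $L$ is simple if $[L,L]\neq0$ and its only ideals are $0$ and $L$. $H=\bigoplus_gH_g$ is a maximal abelian graded subalgebra (so $\phi(H_0)=H_0$). For linear $\alpha:H_0\to\mathbb{K}$, $L_\alpha=\{v:[h,v]=\alpha(h)\phi(v)\ \forall h\in H_0\}$; $\Lambda=\{\alpha\in H_0^*\setminus\{0\}:L_\alpha\neq0\}$; $L$ is split if $L=H\oplus(\bigoplus_{\alpha\in\Lambda}L_\alpha)$. $\Lambda$ is symmetric if $\alpha\in\Lambda\Rightarrow-\alpha\in\Lambda$. For $z\in\mathbb{Z}$, $\alpha\phi^{z}:=\alpha\circ(\phi|_{H_0})^{z}$; $\mathbb{N}=\{0,1,2,\dots\}$. Connection: for $\alpha,\beta\in\Lambda$, $\alpha$ is connected to $\beta$ if there exist $k\ge1$ and $\alpha_1,\dots,\alpha_k\in\Lambda$ such that: if $k=1$, $\alpha_1\in\{\alpha\phi^{-n}:n\in\mathbb{N}\}\cap\{\pm\beta\phi^{-m}:m\in\mathbb{N}\}$; if $k\ge2$, then $\alpha_1\in\{\alpha\phi^{-n}:n\in\mathbb{N}\}$, for each $i=1,\dots,k-2$ one has $\alpha_1\phi^{-i}+\alpha_2\phi^{-i}+\alpha_3\phi^{-i+1}+\cdots+\alpha_{i+1}\phi^{-1}\in\Lambda$, and $\alpha_1\phi^{-k+1}+\alpha_2\phi^{-k+1}+\alpha_3\phi^{-k+2}+\cdots+\alpha_k\phi^{-1}\in\{\pm\beta\phi^{-m}:m\in\mathbb{N}\}$.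 Connectedness $\sim$ is an equivalence relation on $\Lambda$; $\Lambda_\alpha:=\{\beta\in\Lambda:\beta\sim\alpha\}$. Define $H_{\Lambda_\alpha}:=\mathrm{span}_{\mathbb{K}}\{[L_\beta,L_{-\beta}]:\beta\in\Lambda_\alpha\}\subset H$, $V_{\Lambda_\alpha}:=\bigoplus_{\beta\in\Lambda_\alpha}L_\beta$, and $L_{\Lambda_\alpha}:=H_{\Lambda_\alpha}\oplus V_{\Lambda_\alpha}$. *)

theory Defs
  imports Complex_Main
begin

text \<open>The Hom-Lie color algebra L is the whole type 'v, a vector space over the
field 'k via the scalar multiplication sm; the grading is G :: 'g \<Rightarrow> 'v set
(G g = L_g); br is the bracket, phi the twisting map, eps the bi-character.\<close>

definition bicharacter :: "('g::ab_group_add \<Rightarrow> 'g \<Rightarrow> 'k::field) \<Rightarrow> bool" where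
  "bicharacter eps \<longleftrightarrow>
     (\<forall>a b. eps a b \<noteq> 0) \<and>
     (\<forall>a b. eps a b * eps b a = 1) \<and>
     (\<forall>a b c. eps a (b + c) = eps a b * eps a c) \<and>
     (\<forall>a b c. eps (a + b) c = eps a c * eps b c)"

definition graded_space :: "('k::field \<Rightarrow> 'v::ab_group_add \<Rightarrow> 'v) \<Rightarrow> ('g::ab_group_add \<Rightarrow> 'v set) \<Rightarrow> bool" where
  "graded_space sm G \<longleftrightarrow>
     vector_space sm \<and>
     (\<forall>g. module.subspace sm (G g)) \<and>
     (\<forall>v. \<exists>!c. finite {g. c g \<noteq> 0} \<and> (\<forall>g. c g \<in> G g) \<and> v = sum c {g. c g \<noteq> 0})"

definition hom_lie_color ::
  "('k::field \<Rightarrow> 'v::ab_group_add \<Rightarrow> 'v) \<Rightarrow> ('g::ab_group_add \<Rightarrow> 'v set) \<Rightarrow>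
   ('v \<Rightarrow> 'v \<Rightarrow> 'v) \<Rightarrow> ('v \<Rightarrow> 'v) \<Rightarrow> ('g \<Rightarrow> 'g \<Rightarrow> 'k) \<Rightarrow> bool" where
  "hom_lie_color sm G br phi eps \<longleftrightarrow>
     graded_space sm G \<and> bicharacter eps \<and>
     (\<forall>x y z. br (x + y) z = br x z + br y z) \<and>
     (\<forall>x y z. br x (y + z) = br x y + br x z) \<and>
     (\<forall>a x y. br (sm a x) y = sm a (br x y)) \<and>
     (\<forall>a x y. br x (sm a y) = sm a (br x y)) \<and>
     Vector_Spaces.linear sm sm phi \<and>
     (\<forall>g h x y. x \<in> G g \<longrightarrow> y \<in> G h \<longrightarrow> br x y \<in> G (g + h)) \<and>
     (\<forall>g x. x \<in> G g \<longrightarrow> phi x \<in> G g) \<and>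
     (\<forall>x y. phi (br x y) = br (phi x) (phi y)) \<and>
     (\<forall>g h x y. x \<in> G g \<longrightarrow> y \<in> G h \<longrightarrow> br x y = - sm (eps g h) (br y x)) \<and>
     (\<forall>g h k x y z. x \<in> G g \<longrightarrow> y \<in> G h \<longrightarrow> z \<in> G k \<longrightarrow>
        sm (eps k g) (br (phi x) (br y z)) + sm (eps g h) (br (phi y) (br z x))
        + sm (eps h k) (br (phi z) (br x y)) = 0)"

definition graded_subspace :: "('k::field \<Rightarrow> 'v::ab_group_add \<Rightarrow> 'v) \<Rightarrow> ('g \<Rightarrow> 'v set) \<Rightarrow> 'v set \<Rightarrow> bool" where
  "graded_subspace sm G A \<longleftrightarrow> module.subspace sm A \<and> A \<subseteq> module.span sm (\<Union>g. A \<inter> G g)"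

definition subalgebra :: "('k::field \<Rightarrow> 'v::ab_group_add \<Rightarrow> 'v) \<Rightarrow> ('g \<Rightarrow> 'v set) \<Rightarrow>
   ('v \<Rightarrow> 'v \<Rightarrow> 'v) \<Rightarrow> ('v \<Rightarrow> 'v) \<Rightarrow> 'v set \<Rightarrow> bool" where
  "subalgebra sm G br phi A \<longleftrightarrow> graded_subspace sm G A \<and> (\<forall>x\<in>A. \<forall>y\<in>A. br x y \<in> A) \<and> phi ` A = A"

definition abelian_subalgebra :: "('k::field \<Rightarrow> 'v::ab_group_add \<Rightarrow> 'v) \<Rightarrow> ('g \<Rightarrow> 'v set) \<Rightarrow>
   ('v \<Rightarrow> 'v \<Rightarrow> 'v) \<Rightarrow> ('v \<Rightarrow> 'v) \<Rightarrow> 'v set \<Rightarrow> bool" where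
  "abelian_subalgebra sm G br phi A \<longleftrightarrow> subalgebra sm G br phi A \<and> (\<forall>x\<in>A. \<forall>y\<in>A. br x y = 0)"

definition max_abelian_subalgebra :: "('k::field \<Rightarrow> 'v::ab_group_add \<Rightarrow> 'v) \<Rightarrow> ('g \<Rightarrow> 'v set) \<Rightarrow>
   ('v \<Rightarrow> 'v \<Rightarrow> 'v) \<Rightarrow> ('v \<Rightarrow> 'v) \<Rightarrow> 'v set \<Rightarrow> bool" where
  "max_abelian_subalgebra sm G br phi H \<longleftrightarrow> abelian_subalgebra sm G br phi H \<and>
     (\<forall>A. abelian_subalgebra sm G br phi A \<and> H \<subseteq> A \<longrightarrow> A = H)"

definition hlc_ideal :: "('k::field \<Rightarrow> 'v::ab_group_add \<Rightarrow> 'v) \<Rightarrow> ('g \<Rightarrow> 'v set) \<Rightarrow>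
   ('v \<Rightarrow> 'v \<Rightarrow> 'v) \<Rightarrow> ('v \<Rightarrow> 'v) \<Rightarrow> 'v set \<Rightarrow> bool" where
  "hlc_ideal sm G br phi I \<longleftrightarrow> graded_subspace sm G I \<and> (\<forall>x\<in>I. \<forall>y. br x y \<in> I) \<and> phi ` I = I"

definition hlc_simple :: "('k::field \<Rightarrow> 'v::ab_group_add \<Rightarrow> 'v) \<Rightarrow> ('g \<Rightarrow> 'v set) \<Rightarrow>
   ('v \<Rightarrow> 'v \<Rightarrow> 'v) \<Rightarrow> ('v \<Rightarrow> 'v) \<Rightarrow> bool" where
  "hlc_simple sm G br phi \<longleftrightarrow> (\<exists>x y. br x y \<noteq> 0) \<and>
     (\<forall>I. hlc_ideal sm G br phi I \<longrightarrow> I = {0} \<or> I = UNIV)"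

text \<open>H_0 (degree-zero part of H), and linear forms on H_0, represented
extensionally as functions 'v \<Rightarrow> 'k vanishing outside H_0.\<close>
definition H0 :: "('g::zero \<Rightarrow> 'v set) \<Rightarrow> 'v set \<Rightarrow> 'v set" where
  "H0 G H = H \<inter> G 0"

definition H0dual :: "('k::field \<Rightarrow> 'v::ab_group_add \<Rightarrow> 'v) \<Rightarrow> ('g::zero \<Rightarrow> 'v set) \<Rightarrow> 'v set \<Rightarrow> ('v \<Rightarrow> 'k) set" where
  "H0dual sm G H = {\<alpha>. (\<forall>x\<in>H0 G H. \<forall>y\<in>H0 G H. \<alpha> (x + y) = \<alpha> x + \<alpha> y) \<and>
                       (\<forall>c. \<forall>x\<in>H0 G H. \<alpha> (sm c x) = c * \<alpha> x) \<and>
                       (\<forall>x. x \<notin> H0 G H \<longrightarrow> \<alpha> x = 0)}"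

definition root_space :: "('k::field \<Rightarrow> 'v::ab_group_add \<Rightarrow> 'v) \<Rightarrow> ('g::zero \<Rightarrow> 'v set) \<Rightarrow>
   ('v \<Rightarrow> 'v \<Rightarrow> 'v) \<Rightarrow> ('v \<Rightarrow> 'v) \<Rightarrow> 'v set \<Rightarrow> ('v \<Rightarrow> 'k) \<Rightarrow> 'v set" where
  "root_space sm G br phi H \<alpha> = {v. \<forall>h\<in>H0 G H. br h v = sm (\<alpha> h) (phi v)}"

definition roots :: "('k::field \<Rightarrow> 'v::ab_group_add \<Rightarrow> 'v) \<Rightarrow> ('g::zero \<Rightarrow> 'v set) \<Rightarrow>
   ('v \<Rightarrow> 'v \<Rightarrow> 'v) \<Rightarrow> ('v \<Rightarrow> 'v) \<Rightarrow> 'v set \<Rightarrow> ('v \<Rightarrow> 'k) set" where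
  "roots sm G br phi H = {\<alpha> \<in> H0dual sm G H. \<alpha> \<noteq> (\<lambda>_. 0) \<and> root_space sm G br phi H \<alpha> \<noteq> {0}}"

definition neg_form :: "('v \<Rightarrow> 'k::field) \<Rightarrow> 'v \<Rightarrow> 'k" where
  "neg_form \<alpha> = (\<lambda>h. - \<alpha> h)"

definition split_hlc :: "('k::field \<Rightarrow> 'v::ab_group_add \<Rightarrow> 'v) \<Rightarrow> ('g::zero \<Rightarrow> 'v set) \<Rightarrow>
   ('v \<Rightarrow> 'v \<Rightarrow> 'v) \<Rightarrow> ('v \<Rightarrow> 'v) \<Rightarrow> 'v set \<Rightarrow> bool" where
  "split_hlc sm G br phi H \<longleftrightarrow>
     (\<forall>v. v \<in> module.span sm (H \<union> (\<Union>\<alpha>\<in>roots sm G br phi H. root_space sm G br phi H \<alpha>)))"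

definition symmetric_roots :: "('k::field \<Rightarrow> 'v::ab_group_add \<Rightarrow> 'v) \<Rightarrow> ('g::zero \<Rightarrow> 'v set) \<Rightarrow>
   ('v \<Rightarrow> 'v \<Rightarrow> 'v) \<Rightarrow> ('v \<Rightarrow> 'v) \<Rightarrow> 'v set \<Rightarrow> bool" where
  "symmetric_roots sm G br phi H \<longleftrightarrow>
     (\<forall>\<alpha>\<in>roots sm G br phi H. neg_form \<alpha> \<in> roots sm G br phi H)"

text \<open>alpha phi^{-n} = alpha \<circ> (phi|H_0)^{-n}, extended by 0 outside H_0.
  For regular phi with phi(H_0) = H_0, (phi|H_0)^{-1} is the restriction of inv phi.\<close>
definition shift :: "('v \<Rightarrow> 'v) \<Rightarrow> 'v set \<Rightarrow> ('v \<Rightarrow> 'k::field) \<Rightarrow> nat \<Rightarrow> 'v \<Rightarrow> 'k" where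
  "shift phi H0' \<alpha> n = (\<lambda>h. if h \<in> H0' then \<alpha> (((inv phi) ^^ n) h) else 0)"

definition conn_sum :: "('v \<Rightarrow> 'v) \<Rightarrow> 'v set \<Rightarrow> (nat \<Rightarrow> 'v \<Rightarrow> 'k::field) \<Rightarrow> nat \<Rightarrow> 'v \<Rightarrow> 'k" where
  "conn_sum phi H0' a i = (\<lambda>h. shift phi H0' (a 1) i h +
                              (\<Sum>j\<in>{2..i+1}. shift phi H0' (a j) (i + 2 - j) h))"

definition connected :: "('k::field \<Rightarrow> 'v::ab_group_add \<Rightarrow> 'v) \<Rightarrow> ('g::zero \<Rightarrow> 'v set) \<Rightarrow>
   ('v \<Rightarrow> 'v \<Rightarrow> 'v) \<Rightarrow> ('v \<Rightarrow> 'v) \<Rightarrow> 'v set \<Rightarrow> ('v \<Rightarrow> 'k) \<Rightarrow> ('v \<Rightarrow> 'k) \<Rightarrow> bool" where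
  "connected sm G br phi H \<alpha> \<beta> \<longleftrightarrow>
     (let \<Lambda> = roots sm G br phi H; Z = H0 G H;
          PM = {shift phi Z \<beta> m | m. True} \<union> {shift phi Z (neg_form \<beta>) m | m. True} in
      \<exists>k\<ge>1. \<exists>a :: nat \<Rightarrow> 'v \<Rightarrow> 'k.
        (\<forall>j\<in>{1..k}. a j \<in> \<Lambda>) \<and>
        a 1 \<in> {shift phi Z \<alpha> n | n. True} \<and>
        (if k = 1 then a 1 \<in> PM
         else (\<forall>i\<in>{1..k-2}. conn_sum phi Z a i \<in> \<Lambda>) \<and> conn_sum phi Z a (k - 1) \<in> PM))"

definition root_class :: "('k::field \<Rightarrow> 'v::ab_group_add \<Rightarrow> 'v) \<Rightarrow> ('g::zero \<Rightarrow> 'v set) \<Rightarrow>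
   ('v \<Rightarrow> 'v \<Rightarrow> 'v) \<Rightarrow> ('v \<Rightarrow> 'v) \<Rightarrow> 'v set \<Rightarrow> ('v \<Rightarrow> 'k) \<Rightarrow> ('v \<Rightarrow> 'k) set" where
  "root_class sm G br phi H \<alpha> = {\<beta> \<in> roots sm G br phi H. connected sm G br phi H \<beta> \<alpha>}"

definition brackets :: "('v \<Rightarrow> 'v \<Rightarrow> 'v) \<Rightarrow> 'v set \<Rightarrow> 'v set \<Rightarrow> 'v set" where
  "brackets br A B = {br x y | x y. x \<in> A \<and> y \<in> B}"

definition H_class :: "('k::field \<Rightarrow> 'v::ab_group_add \<Rightarrow> 'v) \<Rightarrow> ('g::zero \<Rightarrow> 'v set) \<Rightarrow>
   ('v \<Rightarrow> 'v \<Rightarrow> 'v) \<Rightarrow> ('v \<Rightarrow> 'v) \<Rightarrow> 'v set \<Rightarrow> ('v \<Rightarrow> 'k) \<Rightarrow> 'v set" where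
  "H_class sm G br phi H \<alpha> = module.span sm
     (\<Union>\<beta>\<in>root_class sm G br phi H \<alpha>.
        brackets br (root_space sm G br phi H \<beta>) (root_space sm G br phi H (neg_form \<beta>)))"

definition V_class :: "('k::field \<Rightarrow> 'v::ab_group_add \<Rightarrow> 'v) \<Rightarrow> ('g::zero \<Rightarrow> 'v set) \<Rightarrow>
   ('v \<Rightarrow> 'v \<Rightarrow> 'v) \<Rightarrow> ('v \<Rightarrow> 'v) \<Rightarrow> 'v set \<Rightarrow> ('v \<Rightarrow> 'k) \<Rightarrow> 'v set" where
  "V_class sm G br phi H \<alpha> = module.span sm
     (\<Union>\<beta>\<in>root_class sm G br phi H \<alpha>. root_space sm G br phi H \<beta>)"

definition L_class :: "('k::field \<Rightarrow> 'v::ab_group_add \<Rightarrow> 'v) \<Rightarrow> ('g::zero \<Rightarrow> 'v set) \<Rightarrow>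
   ('v \<Rightarrow> 'v \<Rightarrow> 'v) \<Rightarrow> ('v \<Rightarrow> 'v) \<Rightarrow> 'v set \<Rightarrow> ('v \<Rightarrow> 'k) \<Rightarrow> 'v set" where
  "L_class sm G br phi H \<alpha> =
     {x + y | x y. x \<in> H_class sm G br phi H \<alpha> \<and> y \<in> V_class sm G br phi H \<alpha>}"

end

theory Submission
  imports Defs
begin

text \<open>
  Because \<open>\<phi>\<close> is an automorphism and \<open>H\<^sub>0\<close> is abelian, twisted Jacobi with an element of \<open>H\<^sub>0\<close>
  gives \<open>[L\<^sub>\<alpha>, L\<^sub>\<beta>] \<subseteq> L\<^bsub>\<alpha>\<phi>\<^sup>-\<^sup>1 + \<beta>\<phi>\<^sup>-\<^sup>1\<^esub>\<close>, \<open>\<phi>(L\<^sub>\<alpha>) \<subseteq> L\<^bsub>\<alpha>\<phi>\<^sup>-\<^sup>1\<^esub>\<close> and \<open>[L\<^sub>\<alpha>, L\<^bsub>-\<alpha>\<^esub>] \<subseteq> L\<^sub>0 = H\<close>.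
  Connections are exactly the forms reachable from \<open>\<alpha>\<phi>\<^sup>-\<^sup>n\<close> by the step
  \<open>S \<mapsto> S\<phi>\<^sup>-\<^sup>1 + \<gamma>\<phi>\<^sup>-\<^sup>1\<close> through roots, which makes connectedness transitive and closed under
  shifts; so each class is stable under \<open>\<phi>\<^sup>\<plusminus>\<^sup>1\<close>. Bracketing a generator of \<open>L\<^sub>\<Lambda>\<^sub>\<alpha>\<close> with a root
  vector of \<open>L\<^sub>\<gamma>\<close> either lands in a root space of the same class, in \<open>H\<^sub>\<Lambda>\<^sub>\<alpha>\<close>, or, when \<open>\<gamma>\<phi>\<^sup>-\<^sup>1\<close>
  is not in the class, vanishes by twisted Jacobi, since both inner brackets would connect
  \<open>\<gamma>\<phi>\<^sup>-\<^sup>1\<close> to the class. If \<open>L\<close> is simple it is everything, and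
  the directness of the root space decomposition forces every root into the class of \<open>\<alpha>\<close>
  and \<open>H\<close> into \<open>H\<^sub>\<Lambda>\<^sub>\<alpha>\<close>.
\<close>

locale regular_hom_lie_color =
  fixes sm :: "'k::field \<Rightarrow> 'v::ab_group_add \<Rightarrow> 'v"
    and G :: "'g::ab_group_add \<Rightarrow> 'v set"
    and br :: "'v \<Rightarrow> 'v \<Rightarrow> 'v"
    and phi :: "'v \<Rightarrow> 'v"
    and eps :: "'g \<Rightarrow> 'g \<Rightarrow> 'k"
  assumes hom_lie_color: "hom_lie_color sm G br phi eps"
    and bij_phi: "bij phi"
begin

lemmas hom_lie_color_unfolded =
  hom_lie_color[unfolded hom_lie_color_def bicharacter_def graded_space_def]

sublocale vector_space sm
  using hom_lie_color_unfolded by (elim conjE)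

sublocale phi: Vector_Spaces.linear sm sm phi
  using hom_lie_color_unfolded by (elim conjE)

lemma subspace_grade: "subspace (G g)"
  using hom_lie_color_unfolded by (elim conjE) blast

lemma graded_decomposition_unique:
  "\<exists>!c. finite {g. c g \<noteq> 0} \<and> (\<forall>g. c g \<in> G g) \<and> v = sum c {g. c g \<noteq> 0}"
  using hom_lie_color_unfolded by (elim conjE) (erule allE)

lemma eps_nonzero: "eps a b \<noteq> 0"
  and eps_swap: "eps a b * eps b a = 1"
  and eps_add_right: "eps a (b + c) = eps a b * eps a c"
  and eps_add_left: "eps (a + b) c = eps a c * eps b c"
  using hom_lie_color_unfolded by meson+

lemma bracket_add_left: "br (x + y) z = br x z + br y z"
  and bracket_add_right: "br x (y + z) = br x y + br x z"
  and bracket_scale_left: "br (sm a x) y = sm a (br x y)"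
  and bracket_scale_right: "br x (sm a y) = sm a (br x y)"
  and phi_bracket: "phi (br x y) = br (phi x) (phi y)"
  using hom_lie_color_unfolded by meson+

lemma bracket_grade: "x \<in> G g \<Longrightarrow> y \<in> G h \<Longrightarrow> br x y \<in> G (g + h)"
  and phi_grade: "x \<in> G g \<Longrightarrow> phi x \<in> G g"
  and skew_symmetry: "x \<in> G g \<Longrightarrow> y \<in> G h \<Longrightarrow> br x y = - sm (eps g h) (br y x)"
  using hom_lie_color_unfolded by meson+

lemma hom_jacobi:
  "x \<in> G g \<Longrightarrow> y \<in> G h \<Longrightarrow> z \<in> G k \<Longrightarrow>
   sm (eps k g) (br (phi x) (br y z)) + sm (eps g h) (br (phi y) (br z x))
   + sm (eps h k) (br (phi z) (br x y)) = 0"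
  using hom_lie_color_unfolded by meson

lemma eps_zero_right: "eps a 0 = 1"
  using eps_add_right[of a 0 0] eps_nonzero[of a 0] by simp

lemma eps_zero_left: "eps 0 a = 1"
  using eps_add_left[of 0 0 a] eps_nonzero[of 0 a] by simp

lemma bracket_zero_left [simp]: "br 0 y = 0"
  using bracket_add_left[of 0 0 y] by simp

lemma bracket_zero_right [simp]: "br x 0 = 0"
  using bracket_add_right[of x 0 0] by simp

lemma bracket_sum_left: "br (sum f A) y = (\<Sum>a\<in>A. br (f a) y)"
  by (induction A rule: infinite_finite_induct) (auto simp: bracket_add_left)

lemma bracket_sum_right: "br y (sum f A) = (\<Sum>a\<in>A. br y (f a))"
  by (induction A rule: infinite_finite_induct) (auto simp: bracket_add_right)

lemma bracket_sum_sum: "br (sum f A) (sum g B) = (\<Sum>a\<in>A. \<Sum>b\<in>B. br (f a) (g b))"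
  by (simp only: bracket_sum_left, simp only: bracket_sum_right)

lemma bracket_neg_right: "br x (- y) = - br x y"
  using bracket_add_right[of x y "-y"] by (simp add: eq_neg_iff_add_eq_0 add.commute)

lemma phi_inv_phi [simp]: "phi (inv phi x) = x"
  using bij_phi by (simp add: bij_is_surj surj_f_inv_f)

lemma inv_phi_phi [simp]: "inv phi (phi x) = x"
  using bij_phi by (simp add: bij_is_inj)

lemma phi_eq_0_iff: "phi x = 0 \<longleftrightarrow> x = 0"
  by (metis inv_phi_phi phi.zero)

sublocale inv_phi: Vector_Spaces.linear sm sm "inv phi"
proof (unfold_locales)
  show "inv phi (x + y) = inv phi x + inv phi y" for x y
    by (metis inv_phi_phi phi.add phi_inv_phi)
  show "inv phi (sm c x) = sm c (inv phi x)" for c x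
    by (metis inv_phi_phi phi.scale phi_inv_phi)
qed

lemma inv_phi_bracket: "inv phi (br x y) = br (inv phi x) (inv phi y)"
  by (metis inv_phi_phi phi_bracket phi_inv_phi)

subsection \<open>Homogeneous components\<close>

definition hcomp :: "'v \<Rightarrow> 'g \<Rightarrow> 'v" where
  "hcomp v = (THE c. finite {g. c g \<noteq> 0} \<and> (\<forall>g. c g \<in> G g) \<and> v = sum c {g. c g \<noteq> 0})"

abbreviation hsupp :: "'v \<Rightarrow> 'g set" where
  "hsupp v \<equiv> {g. hcomp v g \<noteq> 0}"

lemma hcomp_props: "finite (hsupp v) \<and> (\<forall>g. hcomp v g \<in> G g) \<and> v = sum (hcomp v) (hsupp v)"
  unfolding hcomp_def by (rule theI'[OF graded_decomposition_unique])

lemma finite_hsupp: "finite (hsupp v)"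
  and hcomp_grade: "hcomp v g \<in> G g"
  and sum_hcomp: "sum (hcomp v) (hsupp v) = v"
  using hcomp_props[of v] by (blast, blast, metis)

lemma hcomp_unique:
  assumes "finite S" "\<And>g. c g \<in> G g" "\<And>g. g \<notin> S \<Longrightarrow> c g = 0" "sum c S = v"
  shows "hcomp v = c"
  unfolding hcomp_def
proof (rule the1_equality[OF graded_decomposition_unique])
  have sub: "{g. c g \<noteq> 0} \<subseteq> S" using assms(3) by blast
  have "sum c S = sum c {g. c g \<noteq> 0}"
    by (rule sum.mono_neutral_right[OF assms(1) sub]) auto
  then show "finite {g. c g \<noteq> 0} \<and> (\<forall>g. c g \<in> G g) \<and> v = sum c {g. c g \<noteq> 0}"
    using finite_subset[OF sub assms(1)] assms(2,4) by blast
qed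

lemma graded_sum_eq:
  assumes "finite S" "\<And>g. c g \<in> G g" "\<And>g. g \<notin> S \<Longrightarrow> c g = 0"
    "\<And>g. d g \<in> G g" "\<And>g. g \<notin> S \<Longrightarrow> d g = 0" "sum c S = sum d S"
  shows "c = d"
  using hcomp_unique[OF assms(1-3) refl] hcomp_unique[OF assms(1,4,5) refl] assms(6) by metis

lemma sum_hcomp_superset:
  assumes "finite S" "hsupp v \<subseteq> S"
  shows "sum (hcomp v) S = v"
proof -
  have "sum (hcomp v) (hsupp v) = sum (hcomp v) S"
    by (rule sum.mono_neutral_left[OF assms]) blast
  then show ?thesis
    using sum_hcomp[of v] by metis
qed

lemma inv_phi_grade:
  assumes x: "x \<in> G g"
  shows "inv phi x \<in> G g"
proof -
  define y where "y = inv phi x"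
  define S where "S = insert g (hsupp y)"
  have S: "finite S" "hsupp y \<subseteq> S" unfolding S_def using finite_hsupp by auto
  have "sum (\<lambda>k. phi (hcomp y k)) S = x"
    using sum_hcomp_superset[OF S] by (simp add: y_def flip: phi.sum)
  also have "x = sum (\<lambda>k. if k = g then x else 0) S"
    using S unfolding S_def by simp
  finally have "(\<lambda>k. phi (hcomp y k)) = (\<lambda>k. if k = g then x else 0)"
    by (intro graded_sum_eq[OF S(1)])
      (auto simp: S_def phi_grade hcomp_grade x subspace_0[OF subspace_grade])
  then have "phi (hcomp y k) = 0" if "k \<noteq> g" for k
    using that by (metis (mono_tags))
  then have "hsupp y \<subseteq> {g}"
    using phi_eq_0_iff by blast
  then have "sum (hcomp y) {g} = y"
    by (intro sum_hcomp_superset) auto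
  then have "y = hcomp y g"
    by simp
  then show ?thesis
    using hcomp_grade[of y g] y_def by simp
qed

lemma hom_jacobi_degree_zero_homogeneous:
  assumes h: "h \<in> G 0" and x: "x \<in> G g" and y: "y \<in> G k"
  shows "br (phi h) (br x y) = br (phi x) (br h y) + br (br h x) (phi y)"
proof -
  have hx: "br h x \<in> G g" using bracket_grade[OF h x] by simp
  have yh: "br y h = - br h y"
    using skew_symmetry[OF y h] by (simp add: eps_zero_right)
  have "sm (eps g k) (br (phi y) (br h x)) = - br (br h x) (phi y)"
    by (simp add: skew_symmetry[OF phi_grade[OF y] hx] eps_swap)
  then have "br (phi h) (br x y) + - br (phi x) (br h y) + - br (br h x) (phi y) = 0"
    using hom_jacobi[OF h x y] by (simp only: eps_zero_right eps_zero_left scale_one yh bracket_neg_right)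
  then show ?thesis
    by (simp add: algebra_simps)
qed

text \<open>The twisted Jacobi identity for a degree zero element needs no signs, so it
  extends from homogeneous to arbitrary \<open>x, y\<close>.\<close>
lemma hom_jacobi_degree_zero:
  assumes h: "h \<in> G 0"
  shows "br (phi h) (br x y) = br (phi x) (br h y) + br (br h x) (phi y)"
proof -
  let ?x = "hcomp x" and ?y = "hcomp y"
  have "br (phi h) (br x y) = br (phi h) (br (sum ?x (hsupp x)) (sum ?y (hsupp y)))"
    by (simp only: sum_hcomp)
  also have "\<dots> = (\<Sum>a\<in>hsupp x. \<Sum>b\<in>hsupp y. br (phi h) (br (?x a) (?y b)))"
    by (simp only: bracket_sum_sum, simp only: bracket_sum_right)
  also have "\<dots> = (\<Sum>a\<in>hsupp x. \<Sum>b\<in>hsupp y. br (phi (?x a)) (br h (?y b)))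
                 + (\<Sum>a\<in>hsupp x. \<Sum>b\<in>hsupp y. br (br h (?x a)) (phi (?y b)))"
    by (simp only: hom_jacobi_degree_zero_homogeneous[OF h hcomp_grade hcomp_grade] sum.distrib)
  also have "\<dots> = br (phi (sum ?x (hsupp x))) (br h (sum ?y (hsupp y)))
                 + br (br h (sum ?x (hsupp x))) (phi (sum ?y (hsupp y)))"
    by (simp only: phi.sum bracket_sum_right[of h] bracket_sum_sum)
  also have "\<dots> = br (phi x) (br h y) + br (br h x) (phi y)"
    by (simp only: sum_hcomp)
  finally show ?thesis .
qed

lemma hom_jacobi_vanishing_homogeneous:
  assumes u: "u \<in> G a" and w: "w \<in> G b" and y: "y \<in> G c"
    and "br w y = 0" and "br y u = 0"
  shows "br (br u w) (phi y) = 0"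
proof -
  have "sm (eps b c) (br (phi y) (br u w)) = 0"
    using hom_jacobi[OF u w y] assms(4,5) by simp
  then have "br (phi y) (br u w) = 0"
    using eps_nonzero by simp
  then show ?thesis
    using skew_symmetry[OF bracket_grade[OF u w] phi_grade[OF y]] by simp
qed

lemma hom_jacobi_vanishing:
  assumes "\<And>a c. br (hcomp w a) (hcomp y c) = 0" and "\<And>a c. br (hcomp y c) (hcomp u a) = 0"
  shows "br (br u w) (phi y) = 0"
proof -
  have "br (br u w) (phi y) =
    br (br (sum (hcomp u) (hsupp u)) (sum (hcomp w) (hsupp w))) (phi (sum (hcomp y) (hsupp y)))"
    by (simp only: sum_hcomp)
  also have "\<dots> = (\<Sum>a\<in>hsupp u. \<Sum>c\<in>hsupp y. \<Sum>b\<in>hsupp w.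
                    br (br (hcomp u a) (hcomp w b)) (phi (hcomp y c)))"
    by (simp only: bracket_sum_sum phi.sum, simp only: bracket_sum_left bracket_sum_right)
  also have "\<dots> = 0"
    by (intro sum.neutral ballI hom_jacobi_vanishing_homogeneous[OF hcomp_grade hcomp_grade hcomp_grade] assms)
  finally show ?thesis .
qed

lemma bracket_span_span:
  assumes I: "subspace I" and XY: "\<And>x y. x \<in> X \<Longrightarrow> y \<in> Y \<Longrightarrow> br x y \<in> I"
    and x: "x \<in> span X" and y: "y \<in> span Y"
  shows "br x y \<in> I"
  using x
proof (induction rule: span_induct_alt)
  case base
  show ?case using subspace_0[OF I] by simp
next
  case (step c x' z)
  have "br x' y \<in> I"
    using y
  proof (induction rule: span_induct_alt)
    case base
    show ?case using subspace_0[OF I] by simp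
  next
    case (step d y' w)
    then show ?case
      using XY[OF \<open>x' \<in> X\<close>] subspace_add[OF I] subspace_scale[OF I]
      by (simp add: bracket_add_right bracket_scale_right)
  qed
  then show ?case
    using step subspace_add[OF I] subspace_scale[OF I] by (simp add: bracket_add_left bracket_scale_left)
qed

end

definition add_form :: "('v \<Rightarrow> 'k::field) \<Rightarrow> ('v \<Rightarrow> 'k) \<Rightarrow> 'v \<Rightarrow> 'k" where
  "add_form a b = (\<lambda>h. a h + b h)"

lemma add_form_apply: "add_form a b h = a h + b h"
  and neg_form_apply: "neg_form a h = - a h"
  unfolding add_form_def neg_form_def by simp_all

lemma add_form_commute: "add_form a b = add_form b a"
  by (simp add: add_form_def add.commute)

lemma add_form_zero_left [simp]: "add_form (\<lambda>_. 0) a = a"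
  by (simp add: add_form_def)

lemma neg_form_neg_form [simp]: "neg_form (neg_form a) = a"
  by (simp add: neg_form_def)

lemma neg_form_add_form: "neg_form (add_form a b) = add_form (neg_form a) (neg_form b)"
  by (simp add: fun_eq_iff add_form_apply neg_form_apply)

lemma add_form_neg_form: "add_form a (neg_form a) = (\<lambda>_. 0)"
  by (simp add: fun_eq_iff add_form_apply neg_form_apply)

lemma add_form_eq_zero_iff: "add_form a b = (\<lambda>_. 0) \<longleftrightarrow> b = neg_form a"
  by (auto simp: fun_eq_iff add_form_apply neg_form_apply add_eq_0_iff2 add_eq_0_iff)

locale split_regular_hom_lie_color = regular_hom_lie_color sm G br phi eps
  for sm :: "'k::field \<Rightarrow> 'v::ab_group_add \<Rightarrow> 'v"
    and G :: "'g::ab_group_add \<Rightarrow> 'v set"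
    and br phi eps +
  fixes H :: "'v set"
  assumes abelian_H: "abelian_subalgebra sm G br phi H"
    and split: "split_hlc sm G br phi H"
    and symmetric: "symmetric_roots sm G br phi H"
begin

abbreviation "H\<^sub>0 \<equiv> H0 G H"
abbreviation "R \<equiv> root_space sm G br phi H"
abbreviation "\<Lambda> \<equiv> roots sm G br phi H"
abbreviation "sh \<equiv> shift phi H\<^sub>0"

definition unshift :: "('v \<Rightarrow> 'k) \<Rightarrow> 'v \<Rightarrow> 'k" where
  "unshift a = (\<lambda>h. if h \<in> H\<^sub>0 then a (phi h) else 0)"

lemma subspace_H: "subspace H"
  using abelian_H unfolding abelian_subalgebra_def subalgebra_def graded_subspace_def by blast

lemma bracket_H_H: "x \<in> H \<Longrightarrow> y \<in> H \<Longrightarrow> br x y = 0"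
  using abelian_H unfolding abelian_subalgebra_def by blast

lemma phi_image_H: "phi ` H = H"
  using abelian_H unfolding abelian_subalgebra_def subalgebra_def by blast

lemma split_span: "v \<in> span (H \<union> (\<Union>a\<in>\<Lambda>. R a))"
  using split unfolding split_hlc_def by blast

lemma neg_root: "a \<in> \<Lambda> \<Longrightarrow> neg_form a \<in> \<Lambda>"
  using symmetric unfolding symmetric_roots_def by blast

lemma subspace_H0: "subspace H\<^sub>0"
  unfolding H0_def by (rule subspace_inter[OF subspace_H subspace_grade])

lemma phi_H0: "h \<in> H\<^sub>0 \<Longrightarrow> phi h \<in> H\<^sub>0"
  using phi_image_H phi_grade unfolding H0_def by blast

lemma inv_phi_H0: "h \<in> H\<^sub>0 \<Longrightarrow> inv phi h \<in> H\<^sub>0"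
  using phi_image_H inv_phi_grade unfolding H0_def by (metis IntD1 IntD2 IntI image_iff inv_phi_phi)

lemma funpow_inv_phi_H0: "h \<in> H\<^sub>0 \<Longrightarrow> (inv phi ^^ n) h \<in> H\<^sub>0"
  by (induction n) (auto simp: inv_phi_H0)

lemma shift_apply: "h \<in> H\<^sub>0 \<Longrightarrow> sh a n h = a ((inv phi ^^ n) h)"
  and shift_outside: "h \<notin> H\<^sub>0 \<Longrightarrow> sh a n h = 0"
  unfolding shift_def by simp_all

lemma shift_shift: "sh (sh a n) m = sh a (n + m)"
  by (rule ext) (simp add: shift_def funpow_inv_phi_H0 funpow_add)

lemma shift_0: "(\<And>h. h \<notin> H\<^sub>0 \<Longrightarrow> a h = 0) \<Longrightarrow> sh a 0 = a"
  unfolding shift_def by auto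

lemma shift_add_form: "sh (add_form a b) n = add_form (sh a n) (sh b n)"
  and shift_neg_form: "sh (neg_form a) n = neg_form (sh a n)"
  and shift_zero: "sh (\<lambda>_. 0) n = (\<lambda>_. 0)"
  unfolding shift_def add_form_def neg_form_def by auto

lemma shift_unshift: "(\<And>h. h \<notin> H\<^sub>0 \<Longrightarrow> a h = 0) \<Longrightarrow> sh (unshift a) 1 = a"
  by (rule ext) (auto simp: shift_def unshift_def inv_phi_H0)

lemma unshift_neg_form: "unshift (neg_form a) = neg_form (unshift a)"
  unfolding unshift_def neg_form_def by auto

subsection \<open>Root spaces\<close>

lemma root_space_iff: "x \<in> R a \<longleftrightarrow> (\<forall>h\<in>H\<^sub>0. br h x = sm (a h) (phi x))"
  unfolding root_space_def by simp

lemma subspace_root_space: "subspace (R a)"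
  unfolding subspace_def
  by (auto simp: root_space_iff bracket_add_right bracket_scale_right phi.add phi.scale
      scale_right_distrib mult.commute)

lemma bracket_root_spaces:
  assumes x: "x \<in> R a" and y: "y \<in> R b"
  shows "br x y \<in> R (add_form (sh a 1) (sh b 1))"
  unfolding root_space_iff
proof
  fix h assume h: "h \<in> H\<^sub>0"
  define h' where "h' = inv phi h"
  have h': "h' \<in> H\<^sub>0" "h' \<in> G 0"
    using inv_phi_H0[OF h] unfolding h'_def H0_def by auto
  have "br h (br x y) = br (phi x) (br h' y) + br (br h' x) (phi y)"
    using hom_jacobi_degree_zero[OF h'(2)] by (simp add: h'_def)
  also have "\<dots> = sm (a h' + b h') (phi (br x y))"
    using x y h'(1) by (simp add: root_space_iff bracket_scale_left bracket_scale_right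
        phi_bracket scale_left_distrib add.commute)
  finally show "br h (br x y) = sm (add_form (sh a 1) (sh b 1) h) (phi (br x y))"
    using h by (simp add: shift_apply add_form_apply h'_def)
qed

lemma H_subset_root_space_zero: "x \<in> H \<Longrightarrow> x \<in> R (\<lambda>_. 0)"
  unfolding root_space_iff H0_def using bracket_H_H by auto

lemma phi_root_space:
  assumes x: "x \<in> R a"
  shows "phi x \<in> R (sh a 1)"
  unfolding root_space_iff
proof
  fix h assume h: "h \<in> H\<^sub>0"
  have "br h (phi x) = phi (br (inv phi h) x)"
    by (simp add: phi_bracket)
  also have "\<dots> = sm (a (inv phi h)) (phi (phi x))"
    using x inv_phi_H0[OF h] by (simp add: root_space_iff phi.scale)
  finally show "br h (phi x) = sm (sh a 1 h) (phi (phi x))"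
    using h by (simp add: shift_apply)
qed

lemma inv_phi_root_space:
  assumes x: "x \<in> R a"
  shows "inv phi x \<in> R (unshift a)"
  unfolding root_space_iff
proof
  fix h assume h: "h \<in> H\<^sub>0"
  have "phi (br h (inv phi x)) = sm (a (phi h)) (phi x)"
    using x phi_H0[OF h] by (simp add: phi_bracket root_space_iff)
  then have "br h (inv phi x) = inv phi (sm (a (phi h)) (phi x))"
    by (metis inv_phi_phi)
  then show "br h (inv phi x) = sm (unshift a h) (phi (inv phi x))"
    using h by (simp add: inv_phi.scale unshift_def)
qed

lemma hcomp_root_space:
  assumes x: "x \<in> R a"
  shows "hcomp x g \<in> R a"
  unfolding root_space_iff
proof
  fix h assume h: "h \<in> H\<^sub>0"
  then have "h \<in> G 0" unfolding H0_def by blast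
  have "sum (\<lambda>g. br h (hcomp x g)) (hsupp x) = sum (\<lambda>g. sm (a h) (phi (hcomp x g))) (hsupp x)"
    using x h sum_hcomp[of x]
    by (simp add: root_space_iff flip: bracket_sum_right phi.sum scale_sum_right)
  then have "(\<lambda>g. br h (hcomp x g)) = (\<lambda>g. sm (a h) (phi (hcomp x g)))"
    by (intro graded_sum_eq[OF finite_hsupp])
      (use \<open>h \<in> G 0\<close> in \<open>auto intro: subspace_scale[OF subspace_grade]
        bracket_grade[of h 0, simplified] phi_grade hcomp_grade\<close>)
  then show "br h (hcomp x g) = sm (a h) (phi (hcomp x g))"
    by metis
qed

lemma dual_outside: "a \<in> H0dual sm G H \<Longrightarrow> h \<notin> H\<^sub>0 \<Longrightarrow> a h = 0"
  and dual_add: "a \<in> H0dual sm G H \<Longrightarrow> x \<in> H\<^sub>0 \<Longrightarrow> y \<in> H\<^sub>0 \<Longrightarrow> a (x + y) = a x + a y"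
  and dual_scale: "a \<in> H0dual sm G H \<Longrightarrow> x \<in> H\<^sub>0 \<Longrightarrow> a (sm c x) = c * a x"
  unfolding H0dual_def by blast+

lemma dualI:
  "(\<And>x y. x \<in> H\<^sub>0 \<Longrightarrow> y \<in> H\<^sub>0 \<Longrightarrow> a (x + y) = a x + a y) \<Longrightarrow>
   (\<And>c x. x \<in> H\<^sub>0 \<Longrightarrow> a (sm c x) = c * a x) \<Longrightarrow> (\<And>x. x \<notin> H\<^sub>0 \<Longrightarrow> a x = 0) \<Longrightarrow>
   a \<in> H0dual sm G H"
  unfolding H0dual_def by blast

lemma zero_dual: "(\<lambda>_. 0) \<in> H0dual sm G H"
  and add_form_dual: "a \<in> H0dual sm G H \<Longrightarrow> b \<in> H0dual sm G H \<Longrightarrow> add_form a b \<in> H0dual sm G H"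
  unfolding H0dual_def by (auto simp: add_form_apply neg_form_apply algebra_simps)

lemma shift_1_dual:
  assumes a: "a \<in> H0dual sm G H"
  shows "sh a 1 \<in> H0dual sm G H"
proof (rule dualI)
  show "sh a 1 (x + y) = sh a 1 x + sh a 1 y" if "x \<in> H\<^sub>0" "y \<in> H\<^sub>0" for x y
    using that subspace_add[OF subspace_H0]
    by (simp add: shift_apply inv_phi.add dual_add[OF a] inv_phi_H0)
  show "sh a 1 (sm c x) = c * sh a 1 x" if "x \<in> H\<^sub>0" for c x
    using that subspace_scale[OF subspace_H0]
    by (simp add: shift_apply inv_phi.scale dual_scale[OF a] inv_phi_H0)
qed (rule shift_outside)

lemma unshift_dual:
  assumes a: "a \<in> H0dual sm G H"
  shows "unshift a \<in> H0dual sm G H"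
proof (rule dualI)
  show "unshift a (x + y) = unshift a x + unshift a y" if "x \<in> H\<^sub>0" "y \<in> H\<^sub>0" for x y
    using that subspace_add[OF subspace_H0]
    by (simp add: unshift_def phi.add dual_add[OF a] phi_H0)
  show "unshift a (sm c x) = c * unshift a x" if "x \<in> H\<^sub>0" for c x
    using that subspace_scale[OF subspace_H0]
    by (simp add: unshift_def phi.scale dual_scale[OF a] phi_H0)
qed (simp add: unshift_def)

lemma shift_add_form_eq_zero:
  assumes "b \<in> H0dual sm G H" "g \<in> H0dual sm G H" "add_form (sh b 1) (sh g 1) = (\<lambda>_. 0)"
  shows "g = neg_form b"
proof
  fix h
  show "g h = neg_form b h"
  proof (cases "h \<in> H\<^sub>0")
    case True
    have "add_form (sh b 1) (sh g 1) (phi h) = 0" using assms(3) by simp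
    then show ?thesis
      using True phi_H0[OF True] by (simp add: add_form_apply neg_form_apply shift_apply add_eq_0_iff)
  next
    case False
    then show ?thesis
      using dual_outside[OF assms(1) False] dual_outside[OF assms(2) False] by (simp add: neg_form_apply)
  qed
qed

lemma root_dual: "a \<in> \<Lambda> \<Longrightarrow> a \<in> H0dual sm G H"
  and root_nonzero: "a \<in> \<Lambda> \<Longrightarrow> a \<noteq> (\<lambda>_. 0)"
  and root_vector: "a \<in> \<Lambda> \<Longrightarrow> \<exists>x. x \<in> R a \<and> x \<noteq> 0"
  unfolding roots_def using subspace_0[OF subspace_root_space] by blast+

lemma root_outside: "a \<in> \<Lambda> \<Longrightarrow> h \<notin> H\<^sub>0 \<Longrightarrow> a h = 0"
  using root_dual dual_outside by blast

lemma zero_or_root: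
  "x \<in> R d \<Longrightarrow> x \<noteq> 0 \<Longrightarrow> d \<in> H0dual sm G H \<Longrightarrow> d = (\<lambda>_. 0) \<or> d \<in> \<Lambda>"
  unfolding roots_def by blast

lemma shift_0_root: "a \<in> \<Lambda> \<Longrightarrow> sh a 0 = a"
  using shift_0 root_outside by blast

lemma shift_1_root:
  assumes a: "a \<in> \<Lambda>"
  shows "sh a 1 \<in> \<Lambda>"
proof -
  obtain x where x: "x \<in> R a" "x \<noteq> 0" using root_vector[OF a] by blast
  obtain h where h: "a h \<noteq> 0" using root_nonzero[OF a] by fastforce
  then have "h \<in> H\<^sub>0" using root_outside[OF a] by blast
  then have "sh a 1 (phi h) \<noteq> 0"
    using h by (simp add: shift_apply phi_H0)
  then show ?thesis
    using zero_or_root[OF phi_root_space[OF x(1)] _ shift_1_dual[OF root_dual[OF a]]] x(2)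
    by (force simp: phi_eq_0_iff)
qed

lemma shift_root: "a \<in> \<Lambda> \<Longrightarrow> sh a n \<in> \<Lambda>"
proof (induction n)
  case 0 then show ?case by (simp add: shift_0_root)
next
  case (Suc n)
  then show ?case using shift_1_root[of "sh a n"] by (simp add: shift_shift)
qed

lemma unshift_root:
  assumes a: "a \<in> \<Lambda>"
  shows "unshift a \<in> \<Lambda>"
proof -
  obtain x where x: "x \<in> R a" "x \<noteq> 0" using root_vector[OF a] by blast
  obtain h where h: "a h \<noteq> 0" using root_nonzero[OF a] by fastforce
  then have "h \<in> H\<^sub>0" using root_outside[OF a] by blast
  then have "unshift a (inv phi h) \<noteq> 0"
    using h by (simp add: unshift_def inv_phi_H0)
  then show ?thesis
    using zero_or_root[OF inv_phi_root_space[OF x(1)] _ unshift_dual[OF root_dual[OF a]]] x(2)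
    by (metis phi_inv_phi phi.zero)
qed

subsection \<open>The root space decomposition is direct\<close>

text \<open>Apply \<open>ad h\<close> for an \<open>h \<in> H\<^sub>0\<close> separating one form from another and subtract \<open>g h\<close>
  times the relation: a shorter relation remains.\<close>
lemma root_spaces_independent:
  "finite F \<Longrightarrow> F \<subseteq> H0dual sm G H \<Longrightarrow> (\<forall>a\<in>F. w a \<in> R a) \<Longrightarrow> sum w F = 0 \<Longrightarrow> \<forall>a\<in>F. w a = 0"
proof (induction F arbitrary: w rule: finite_induct)
  case empty then show ?case by simp
next
  case (insert g F)
  have S: "w g + sum w F = 0" using insert by simp
  have "w a = 0" if aF: "a \<in> F" for a
  proof -
    obtain h where h: "a h \<noteq> g h" using aF insert(2) by (metis ext)
    have hZ: "h \<in> H\<^sub>0" using h insert(4) aF dual_outside by (metis insert_subset subsetD)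
    have br_h: "br h (w b) = sm (b h) (phi (w b))" if "b \<in> insert g F" for b
      using insert(5) hZ that unfolding root_space_iff by blast
    have "phi (sm (g h) (w g) + (\<Sum>b\<in>F. sm (b h) (w b))) = br h (w g + sum w F)"
      by (simp add: phi.add phi.sum phi.scale bracket_add_right bracket_sum_right br_h)
    then have A: "sm (g h) (w g) + (\<Sum>b\<in>F. sm (b h) (w b)) = 0"
      using S phi_eq_0_iff by simp
    have B: "sm (g h) (w g) + (\<Sum>b\<in>F. sm (g h) (w b)) = 0"
      using arg_cong[OF S, of "sm (g h)"] by (simp add: scale_right_distrib scale_sum_right)
    have "(\<Sum>b\<in>F. sm (b h - g h) (w b)) = 0"
      using arg_cong2[OF A B, of "(-)"] by (simp add: scale_left_diff_distrib sum_subtractf)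
    then have "\<forall>b\<in>F. sm (b h - g h) (w b) = 0"
      using insert(4,5) subspace_scale[OF subspace_root_space] by (intro insert.IH) auto
    then show "w a = 0" using aF h by force
  qed
  then show ?case using S by simp
qed

lemma root_space_inter_sum:
  assumes "finite F" "F \<subseteq> H0dual sm G H" "\<forall>a\<in>F. w a \<in> R a"
    and "d \<in> H0dual sm G H" "d \<notin> F" "z \<in> R d" "z = sum w F"
  shows "z = 0"
proof -
  define w' where "w' = w(d := - z)"
  have "sum w' F = sum w F"
    using assms(5) by (intro sum.cong) (auto simp: w'_def)
  then have "sum w' (insert d F) = 0"
    using assms(1,5,7) by (simp add: w'_def)
  then have "\<forall>a\<in>insert d F. w' a = 0"
    using assms subspace_neg[OF subspace_root_space] by (intro root_spaces_independent) (auto simp: w'_def)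
  then show ?thesis by (simp add: w'_def)
qed

lemma span_root_spaces_decomp:
  assumes "v \<in> span (\<Union>a\<in>P. R a)"
  shows "\<exists>F w. finite F \<and> F \<subseteq> P \<and> (\<forall>a\<in>F. w a \<in> R a) \<and> v = sum w F"
  using assms
proof (induction rule: span_induct_alt)
  case base
  show ?case by (intro exI[of _ "{}"]) simp
next
  case (step c x y)
  then obtain b F w where b: "b \<in> P" "x \<in> R b"
    and F: "finite F" "F \<subseteq> P" "\<forall>a\<in>F. w a \<in> R a" "y = sum w F" by blast
  define w' where "w' a = (if a = b then sm c x else 0) + (if a \<in> F then w a else 0)" for a
  have "sum w' (insert b F) = sm c x + y"
    using F(1,4) by (simp add: w'_def sum.distrib sum.If_cases inf.absorb2[OF subset_insertI])
  moreover have "w' a \<in> R a" if "a \<in> insert b F" for a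
    unfolding w'_def using that b F(3) subspace_root_space
    by (auto intro!: subspace_add subspace_scale subspace_0)
  ultimately show ?case
    using F b by (intro exI[of _ "insert b F"] exI[of _ w']) auto
qed

lemma root_space_zero_subset_H:
  assumes v: "v \<in> R (\<lambda>_. 0)"
  shows "v \<in> H"
proof -
  obtain x y where xy: "x \<in> H" "y \<in> span (\<Union>a\<in>\<Lambda>. R a)" "v = x + y"
    using split_span[of v] span_eq_iff[THEN iffD2, OF subspace_H] unfolding span_Un by blast
  obtain F w where F: "finite F" "F \<subseteq> \<Lambda>" "\<forall>a\<in>F. w a \<in> R a" "y = sum w F"
    using span_root_spaces_decomp[OF xy(2)] by blast
  have "v - x = 0"
  proof (rule root_space_inter_sum[OF F(1) _ F(3) zero_dual])
    show "F \<subseteq> H0dual sm G H" using F(2) root_dual by blast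
    show "(\<lambda>_. 0) \<notin> F" using F(2) root_nonzero by blast
    show "v - x \<in> R (\<lambda>_. 0)"
      using v H_subset_root_space_zero[OF xy(1)] by (rule subspace_diff[OF subspace_root_space])
    show "v - x = sum w F" using xy(3) F(4) by simp
  qed
  then show ?thesis using xy(1) by simp
qed

subsection \<open>Connections as chains\<close>

definition conn_seq :: "(nat \<Rightarrow> 'v \<Rightarrow> 'k) \<Rightarrow> nat \<Rightarrow> 'v \<Rightarrow> 'k" where
  "conn_seq a i = (if i = 0 then a 1 else conn_sum phi H\<^sub>0 a i)"

lemma conn_seq_Suc: "conn_seq a (Suc i) = add_form (sh (conn_seq a i) 1) (sh (a (Suc (Suc i))) 1)"
proof
  fix h
  show "conn_seq a (Suc i) h = add_form (sh (conn_seq a i) 1) (sh (a (Suc (Suc i))) 1) h"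
  proof (cases "h \<in> H\<^sub>0")
    case False
    then show ?thesis by (simp add: conn_seq_def conn_sum_def shift_outside add_form_apply)
  next
    case h: True
    have shift_1: "sh b (Suc 0) h = b (inv phi h)" for b
      using h by (simp add: shift_apply)
    have shift_inv: "sh b m (inv phi h) = sh b (Suc m) h" for b m
      using h by (simp add: shift_apply inv_phi_H0 funpow_swap1)
    show ?thesis
    proof (cases i)
      case 0
      then show ?thesis by (simp add: conn_seq_def conn_sum_def shift_1 add_form_apply)
    next
      case (Suc i')
      have "sh (conn_seq a i) 1 h = conn_sum phi H\<^sub>0 a i (inv phi h)"
        using Suc by (simp add: conn_seq_def shift_1)
      also have "\<dots> = sh (a 1) (Suc i) h + (\<Sum>j\<in>{2..i + 1}. sh (a j) (Suc (i + 2 - j)) h)"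
        unfolding conn_sum_def by (simp add: shift_inv)
      also have "(\<Sum>j\<in>{2..i + 1}. sh (a j) (Suc (i + 2 - j)) h)
                 = (\<Sum>j\<in>{2..i + 1}. sh (a j) (Suc i + 2 - j) h)"
        by (rule sum.cong) (auto simp: Suc_diff_le)
      finally have prev: "sh (conn_seq a i) 1 h
          = sh (a 1) (Suc i) h + (\<Sum>j\<in>{2..i + 1}. sh (a j) (Suc i + 2 - j) h)" .
      have "{2..Suc i + 1} = insert (Suc (Suc i)) {2..i + 1}" by auto
      then have "conn_seq a (Suc i) h = sh (a 1) (Suc i) h
          + (sh (a (Suc (Suc i))) 1 h + (\<Sum>j\<in>{2..i + 1}. sh (a j) (Suc i + 2 - j) h))"
        by (simp add: conn_seq_def conn_sum_def)
      then show ?thesis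
        using prev by (simp add: add_form_apply algebra_simps)
    qed
  qed
qed

lemma conn_seq_cong: "(\<And>j. 1 \<le> j \<Longrightarrow> j \<le> Suc i \<Longrightarrow> a j = b j) \<Longrightarrow> conn_seq a i = conn_seq b i"
  unfolding conn_seq_def conn_sum_def by (auto intro!: sum.cong)

definition pm_shifts :: "('v \<Rightarrow> 'k) \<Rightarrow> ('v \<Rightarrow> 'k) set" where
  "pm_shifts b = {sh b m | m. True} \<union> {sh (neg_form b) m | m. True}"

lemma connection_tail_iff:
  assumes k: "k \<ge> 1" and a: "\<forall>j\<in>{1..k}. a j \<in> \<Lambda>"
  shows "(if k = 1 then a 1 \<in> P
          else (\<forall>i\<in>{1..k-2}. conn_sum phi H\<^sub>0 a i \<in> \<Lambda>) \<and> conn_sum phi H\<^sub>0 a (k - 1) \<in> P)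
         \<longleftrightarrow> (\<forall>i<k - 1. conn_seq a i \<in> \<Lambda>) \<and> conn_seq a (k - 1) \<in> P"
proof (cases "k = 1")
  case True
  then show ?thesis by (simp add: conn_seq_def)
next
  case False
  have "i < k - 1 \<and> i \<noteq> 0 \<longleftrightarrow> i \<in> {1..k-2}" for i
    using k False by auto
  moreover have "a 1 \<in> \<Lambda>" using a k by simp
  ultimately have "(\<forall>i<k - 1. conn_seq a i \<in> \<Lambda>) \<longleftrightarrow> (\<forall>i\<in>{1..k-2}. conn_sum phi H\<^sub>0 a i \<in> \<Lambda>)"
    unfolding conn_seq_def by (metis (full_types))
  then show ?thesis
    using False k by (simp add: conn_seq_def)
qed

lemma connected_iff_conn_seq:
  "connected sm G br phi H al be \<longleftrightarrow>
   (\<exists>k a n. k \<ge> 1 \<and> (\<forall>j\<in>{1..k}. a j \<in> \<Lambda>) \<and> a 1 = sh al n \<and>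
      (\<forall>i<k - 1. conn_seq a i \<in> \<Lambda>) \<and> conn_seq a (k - 1) \<in> pm_shifts be)"
  unfolding connected_def Let_def pm_shifts_def[symmetric]
  using connection_tail_iff[where P = "pm_shifts be"] by (smt (verit) mem_Collect_eq)

text \<open>The forms reachable from \<open>\<alpha>\<close>: the partial sums of all connections starting at \<open>\<alpha>\<close>.\<close>
inductive conn_chain :: "('v \<Rightarrow> 'k) \<Rightarrow> ('v \<Rightarrow> 'k) \<Rightarrow> bool" for al where
  base: "sh al n \<in> \<Lambda> \<Longrightarrow> conn_chain al (sh al n)"
| step: "conn_chain al S \<Longrightarrow> S \<in> \<Lambda> \<Longrightarrow> c \<in> \<Lambda> \<Longrightarrow> conn_chain al (add_form (sh S 1) (sh c 1))"

lemma conn_seq_conn_chain: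
  "k \<ge> 1 \<Longrightarrow> (\<forall>j\<in>{1..k}. a j \<in> \<Lambda>) \<Longrightarrow> a 1 = sh al n \<Longrightarrow> (\<forall>i<k - 1. conn_seq a i \<in> \<Lambda>)
   \<Longrightarrow> conn_chain al (conn_seq a (k - 1))"
proof (induction k rule: nat_induct_at_least)
  case base
  then show ?case using conn_chain.base[of al n] by (simp add: conn_seq_def)
next
  case (Suc k)
  then have "conn_chain al (add_form (sh (conn_seq a (k - 1)) 1) (sh (a (Suc k)) 1))"
    by (intro conn_chain.step) auto
  then show ?case
    using conn_seq_Suc[of a "k - 1"] Suc(1) by simp
qed

lemma conn_chain_conn_seq:
  "conn_chain al S \<Longrightarrow> \<exists>k a n. k \<ge> 1 \<and> (\<forall>j\<in>{1..k}. a j \<in> \<Lambda>) \<and> a 1 = sh al n \<and>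
     (\<forall>i<k - 1. conn_seq a i \<in> \<Lambda>) \<and> S = conn_seq a (k - 1)"
proof (induction rule: conn_chain.induct)
  case (base n)
  then show ?case
    by (intro exI[of _ 1] exI[of _ "\<lambda>_. sh al n"] exI[of _ n]) (simp add: conn_seq_def)
next
  case (step S c)
  then obtain k a n where k: "k \<ge> 1" "\<forall>j\<in>{1..k}. a j \<in> \<Lambda>" "a 1 = sh al n"
    "\<forall>i<k - 1. conn_seq a i \<in> \<Lambda>" "S = conn_seq a (k - 1)" by blast
  define a' where "a' = a(Suc k := c)"
  have same: "conn_seq a' i = conn_seq a i" if "i \<le> k - 1" for i
    using that k(1) by (intro conn_seq_cong) (auto simp: a'_def)
  have "conn_seq a' (Suc k - 1) = add_form (sh S 1) (sh c 1)"
    using conn_seq_Suc[of a' "k - 1"] k(1,5) same[of "k - 1"] by (simp add: a'_def)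
  moreover have "conn_seq a' i \<in> \<Lambda>" if "i < Suc k - 1" for i
  proof (cases "i = k - 1")
    case True
    then show ?thesis using same[of i] k(5) \<open>S \<in> \<Lambda>\<close> by simp
  next
    case False
    then show ?thesis using that same[of i] k(4) by simp
  qed
  moreover have "a' 1 = sh al n" "\<forall>j\<in>{1..Suc k}. a' j \<in> \<Lambda>"
    using k(1-3) \<open>c \<in> \<Lambda>\<close> by (auto simp: a'_def)
  ultimately show ?case
    by (intro exI[of _ "Suc k"] exI[of _ a'] exI[of _ n]) auto
qed

lemma connected_iff_conn_chain:
  "connected sm G br phi H al be \<longleftrightarrow> (\<exists>S. conn_chain al S \<and> S \<in> pm_shifts be)"
proof
  assume "connected sm G br phi H al be"
  then show "\<exists>S. conn_chain al S \<and> S \<in> pm_shifts be"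
    unfolding connected_iff_conn_seq using conn_seq_conn_chain by blast
next
  assume "\<exists>S. conn_chain al S \<and> S \<in> pm_shifts be"
  then show "connected sm G br phi H al be"
    unfolding connected_iff_conn_seq using conn_chain_conn_seq by blast
qed

lemma conn_chain_shift: "conn_chain al S \<Longrightarrow> conn_chain al (sh S d)"
proof (induction rule: conn_chain.induct)
  case (base n)
  then show ?case
    using conn_chain.base[of al "n + d"] shift_root[OF base, of d] by (simp add: shift_shift)
next
  case (step S c)
  then show ?case
    using conn_chain.step[OF step.IH shift_root[OF step.hyps(2)] shift_root[OF step.hyps(3)]]
    by (simp add: shift_add_form shift_shift)
qed

lemma conn_chain_neg: "conn_chain al S \<Longrightarrow> conn_chain (neg_form al) (neg_form S)"
proof (induction rule: conn_chain.induct)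
  case (base n)
  then show ?case
    using conn_chain.base[of "neg_form al" n] neg_root by (simp add: shift_neg_form)
next
  case (step S c)
  then show ?case
    using conn_chain.step[OF step.IH neg_root[OF step.hyps(2)] neg_root[OF step.hyps(3)]]
    by (simp add: shift_neg_form neg_form_add_form)
qed

lemma conn_chain_concat: "conn_chain be T \<Longrightarrow> conn_chain al (sh be d) \<Longrightarrow> conn_chain al (sh T d)"
proof (induction rule: conn_chain.induct)
  case (base n)
  then show ?case
    using conn_chain_shift[of al "sh be d" n] by (simp add: shift_shift add.commute)
next
  case (step S c)
  then show ?case
    using conn_chain.step[OF step.IH[OF step.prems] shift_root[OF step.hyps(2)] shift_root[OF step.hyps(3)]]
    by (simp add: shift_add_form shift_shift)
qed

lemma connected_trans:
  assumes "connected sm G br phi H al be" "connected sm G br phi H be ga"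
  shows "connected sm G br phi H al ga"
proof -
  obtain S where S: "conn_chain al S" "S \<in> pm_shifts be"
    using assms(1) connected_iff_conn_chain by blast
  obtain T where T: "conn_chain be T" "T \<in> pm_shifts ga"
    using assms(2) connected_iff_conn_chain by blast
  obtain m where "S = sh be m \<or> S = sh (neg_form be) m"
    using S(2) unfolding pm_shifts_def by blast
  then have "conn_chain al (sh T m) \<and> sh T m \<in> pm_shifts ga
           \<or> conn_chain al (sh (neg_form T) m) \<and> sh (neg_form T) m \<in> pm_shifts ga"
    using S(1) T(2) conn_chain_concat[OF T(1)] conn_chain_concat[OF conn_chain_neg[OF T(1)]]
    unfolding pm_shifts_def by (auto simp: shift_shift shift_neg_form)
  then show ?thesis
    unfolding connected_iff_conn_chain by blast
qed

lemma conn_chain_self: "a \<in> \<Lambda> \<Longrightarrow> conn_chain a a"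
  using conn_chain.base[of a 0] by (simp add: shift_0_root)

lemma self_in_pm_shifts: "a \<in> \<Lambda> \<Longrightarrow> a \<in> pm_shifts a"
  unfolding pm_shifts_def using shift_0_root[of a, symmetric] by blast

lemma connected_refl: "a \<in> \<Lambda> \<Longrightarrow> connected sm G br phi H a a"
  unfolding connected_iff_conn_chain using conn_chain_self self_in_pm_shifts by blast

lemma connected_if_in_pm_shifts: "d \<in> \<Lambda> \<Longrightarrow> d \<in> pm_shifts b \<Longrightarrow> connected sm G br phi H d b"
  unfolding connected_iff_conn_chain using conn_chain_self by blast

lemma connected_step:
  "d \<in> \<Lambda> \<Longrightarrow> c \<in> \<Lambda> \<Longrightarrow> add_form (sh d 1) (sh c 1) \<in> pm_shifts b \<Longrightarrow> connected sm G br phi H d b"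
  unfolding connected_iff_conn_chain using conn_chain.step[OF conn_chain_self] by blast

lemma connected_shift_1: "a \<in> \<Lambda> \<Longrightarrow> connected sm G br phi H (sh a 1) a"
  by (rule connected_if_in_pm_shifts[OF shift_1_root]) (auto simp: pm_shifts_def)

lemma connected_unshift:
  assumes a: "a \<in> \<Lambda>"
  shows "connected sm G br phi H (unshift a) a"
proof -
  have "sh (unshift a) 1 = a"
    using shift_unshift root_outside[OF a] by blast
  then have "conn_chain (unshift a) a"
    using conn_chain.base[of "unshift a" 1] a by simp
  then show ?thesis
    unfolding connected_iff_conn_chain using self_in_pm_shifts[OF a] by blast
qed

lemma connected_sum_of_shifts:
  assumes b: "b \<in> \<Lambda>" and g: "g \<in> \<Lambda>" and d: "add_form (sh b 1) (sh g 1) \<in> \<Lambda>"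
  shows "connected sm G br phi H (add_form (sh b 1) (sh g 1)) b"
proof (rule connected_step[OF d neg_root[OF shift_1_root[OF g]]])
  have "add_form (sh (add_form (sh b 1) (sh g 1)) 1) (sh (neg_form (sh g 1)) 1) = sh b 2"
    by (rule ext) (simp add: shift_add_form shift_neg_form shift_shift numeral_2_eq_2 add_form_apply neg_form_apply)
  then show "add_form (sh (add_form (sh b 1) (sh g 1)) 1) (sh (neg_form (sh g 1)) 1) \<in> pm_shifts b"
    unfolding pm_shifts_def by blast
qed

lemma connected_shift_plus:
  assumes b: "b \<in> \<Lambda>" and g: "g \<in> \<Lambda>" and d: "add_form g (sh b 1) \<in> \<Lambda>"
  shows "connected sm G br phi H (sh g 1) b"
proof (rule connected_step[OF shift_1_root[OF g] neg_root[OF shift_1_root[OF d]]])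
  have "add_form (sh (sh g 1) 1) (sh (neg_form (sh (add_form g (sh b 1)) 1)) 1) = sh (neg_form b) 3"
    by (rule ext) (simp add: shift_add_form shift_neg_form shift_shift numeral_3_eq_3 add_form_apply neg_form_apply)
  then show "add_form (sh (sh g 1) 1) (sh (neg_form (sh (add_form g (sh b 1)) 1)) 1) \<in> pm_shifts b"
    unfolding pm_shifts_def by blast
qed

lemma pm_shifts_neg_form: "pm_shifts (neg_form b) = pm_shifts b"
  unfolding pm_shifts_def by auto

lemma connected_neg_form_iff: "connected sm G br phi H d (neg_form b) \<longleftrightarrow> connected sm G br phi H d b"
  unfolding connected_iff_conn_chain pm_shifts_neg_form ..

lemma connected_shift_if_bracket_nonzero:
  assumes b: "b \<in> \<Lambda>" and g: "g \<in> \<Lambda>" and x: "x \<in> R (add_form g (sh b 1))" "x \<noteq> 0"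
  shows "connected sm G br phi H (sh g 1) b"
proof (cases "add_form g (sh b 1) = (\<lambda>_. 0)")
  case True
  then have "g = neg_form (sh b 1)"
    by (simp add: add_form_commute[of g] add_form_eq_zero_iff)
  then have "sh g 1 = sh (neg_form b) 2"
    by (simp add: shift_neg_form shift_shift numeral_2_eq_2)
  then have "sh g 1 \<in> pm_shifts b"
    unfolding pm_shifts_def by blast
  then show ?thesis
    by (rule connected_if_in_pm_shifts[OF shift_1_root[OF g]])
next
  case False
  have "add_form g (sh b 1) \<in> H0dual sm G H"
    using add_form_dual shift_1_dual root_dual b g by blast
  then have "add_form g (sh b 1) \<in> \<Lambda>"
    using zero_or_root[OF x] False by blast
  then show ?thesis
    by (rule connected_shift_plus[OF b g])
qed

subsection \<open>The ideals \<open>L\<^sub>\<Lambda>\<^sub>\<alpha>\<close>\<close>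

abbreviation "C \<equiv> root_class sm G br phi H"
abbreviation "brackets_class a \<equiv> (\<Union>b\<in>C a. brackets br (R b) (R (neg_form b)))"
abbreviation "root_vectors_class a \<equiv> (\<Union>b\<in>C a. R b)"

lemma root_class_iff: "b \<in> C a \<longleftrightarrow> b \<in> \<Lambda> \<and> connected sm G br phi H b a"
  unfolding root_class_def by simp

lemma root_class_trans: "b \<in> C a \<Longrightarrow> d \<in> \<Lambda> \<Longrightarrow> connected sm G br phi H d b \<Longrightarrow> d \<in> C a"
  unfolding root_class_iff using connected_trans by blast

lemma shift_1_root_class: "b \<in> C a \<Longrightarrow> sh b 1 \<in> C a"
  using root_class_trans shift_1_root connected_shift_1 root_class_iff by blast

lemma unshift_root_class: "b \<in> C a \<Longrightarrow> unshift b \<in> C a"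
  using root_class_trans unshift_root connected_unshift root_class_iff by blast

lemma L_class_eq_span: "L_class sm G br phi H a = span (brackets_class a \<union> root_vectors_class a)"
  unfolding L_class_def H_class_def V_class_def span_Un by simp

lemma subspace_L_class: "subspace (L_class sm G br phi H a)"
  unfolding L_class_eq_span by (rule subspace_span)

lemma brackets_class_subset_L_class: "brackets_class a \<subseteq> L_class sm G br phi H a"
  and root_vectors_class_subset_L_class: "root_vectors_class a \<subseteq> L_class sm G br phi H a"
  unfolding L_class_eq_span by (auto intro: span_base)

lemma bracket_opposite_root_spaces: "u \<in> R b \<Longrightarrow> w \<in> R (neg_form b) \<Longrightarrow> br u w \<in> R (\<lambda>_. 0)"
  using bracket_root_spaces[of u b w "neg_form b"] by (simp add: shift_neg_form add_form_neg_form)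

lemma brackets_class_subset_H: "brackets_class a \<subseteq> H"
  unfolding brackets_def using bracket_opposite_root_spaces root_space_zero_subset_H by blast

lemma graded_L_class: "graded_subspace sm G (L_class sm G br phi H a)"
proof -
  let ?L = "L_class sm G br phi H a"
  have "x \<in> span (\<Union>g. ?L \<inter> G g)" if x: "x \<in> brackets_class a \<union> root_vectors_class a" for x
  proof (cases "x \<in> root_vectors_class a")
    case True
    then obtain b where "b \<in> C a" "x \<in> R b" by blast
    then have "hcomp x g \<in> ?L" for g
      using hcomp_root_space root_vectors_class_subset_L_class by blast
    then have "sum (hcomp x) (hsupp x) \<in> span (\<Union>g. ?L \<inter> G g)"
      by (intro span_sum span_base) (use hcomp_grade in blast)
    then show ?thesis
      by (simp only: sum_hcomp)
  next
    case False
    then obtain b u w where b: "b \<in> C a" "u \<in> R b" "w \<in> R (neg_form b)" "x = br u w"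
      using x unfolding brackets_def by blast
    then have x_eq: "x = (\<Sum>c\<in>hsupp u. \<Sum>d\<in>hsupp w. br (hcomp u c) (hcomp w d))"
      using bracket_sum_sum[of "hcomp u" "hsupp u" "hcomp w" "hsupp w"] by (simp add: sum_hcomp)
    have "br (hcomp u c) (hcomp w d) \<in> (\<Union>g. ?L \<inter> G g)" for c d
    proof -
      have "br (hcomp u c) (hcomp w d) \<in> brackets br (R b) (R (neg_form b))"
        unfolding brackets_def using hcomp_root_space[OF b(2)] hcomp_root_space[OF b(3)] by blast
      then have "br (hcomp u c) (hcomp w d) \<in> ?L"
        using b(1) brackets_class_subset_L_class by blast
      then show ?thesis
        using bracket_grade[OF hcomp_grade hcomp_grade] by blast
    qed
    then show ?thesis
      unfolding x_eq by (intro span_sum span_base)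
  qed
  then have "?L \<subseteq> span (\<Union>g. ?L \<inter> G g)"
    unfolding L_class_eq_span[of a] by (intro span_minimal subspace_span) blast
  then show ?thesis
    unfolding graded_subspace_def using subspace_L_class by blast
qed

lemma phi_brackets:
  assumes "u \<in> R b" "w \<in> R (neg_form b)"
  shows "phi (br u w) \<in> brackets br (R (sh b 1)) (R (neg_form (sh b 1)))"
proof -
  have "phi u \<in> R (sh b 1)" "phi w \<in> R (neg_form (sh b 1))"
    using phi_root_space[OF assms(1)] phi_root_space[OF assms(2)] by (simp_all add: shift_neg_form)
  then show ?thesis
    unfolding brackets_def phi_bracket by blast
qed

lemma inv_phi_brackets:
  assumes "u \<in> R b" "w \<in> R (neg_form b)"
  shows "inv phi (br u w) \<in> brackets br (R (unshift b)) (R (neg_form (unshift b)))"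
proof -
  have "inv phi u \<in> R (unshift b)" "inv phi w \<in> R (neg_form (unshift b))"
    using inv_phi_root_space[OF assms(1)] inv_phi_root_space[OF assms(2)]
    by (simp_all add: unshift_neg_form)
  then show ?thesis
    unfolding brackets_def inv_phi_bracket by blast
qed

lemma phi_image_L_class: "phi ` L_class sm G br phi H a = L_class sm G br phi H a"
proof -
  let ?X = "brackets_class a \<union> root_vectors_class a"
  have X_closed: "phi x \<in> ?X \<and> inv phi x \<in> ?X" if x: "x \<in> ?X" for x
  proof -
    consider b where "b \<in> C a" "x \<in> R b"
      | b u w where "b \<in> C a" "u \<in> R b" "w \<in> R (neg_form b)" "x = br u w"
      using x unfolding brackets_def by blast
    then show ?thesis
    proof cases
      case 1
      then show ?thesis
        using phi_root_space[OF 1(2)] shift_1_root_class[OF 1(1)]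
          inv_phi_root_space[OF 1(2)] unshift_root_class[OF 1(1)] by blast
    next
      case 2
      then show ?thesis
        using phi_brackets[OF 2(2,3)] shift_1_root_class[OF 2(1)]
          inv_phi_brackets[OF 2(2,3)] unshift_root_class[OF 2(1)] by blast
    qed
  qed
  have "phi ` span ?X \<subseteq> span ?X"
    unfolding phi.span_image[symmetric] by (rule span_mono) (use X_closed in blast)
  moreover have "inv phi ` span ?X \<subseteq> span ?X"
    unfolding inv_phi.span_image[symmetric] by (rule span_mono) (use X_closed in blast)
  then have "span ?X \<subseteq> phi ` span ?X"
  proof (intro subsetI)
    fix x assume "x \<in> span ?X"
    then have "inv phi x \<in> span ?X"
      using \<open>inv phi ` span ?X \<subseteq> span ?X\<close> by blast
    then show "x \<in> phi ` span ?X"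
      by (rule rev_image_eqI) simp
  qed
  ultimately show ?thesis
    unfolding L_class_eq_span by blast
qed

lemma bracket_root_vector_H:
  assumes b: "b \<in> C a" and x: "x \<in> R b" and y: "y \<in> H"
  shows "br x y \<in> L_class sm G br phi H a"
proof -
  have "br x y \<in> R (sh b 1)"
    using bracket_root_spaces[OF x H_subset_root_space_zero[OF y]]
    by (simp add: shift_zero add_form_commute)
  then show ?thesis
    using shift_1_root_class[OF b] root_vectors_class_subset_L_class by blast
qed

lemma bracket_root_vector_root_vector:
  assumes b: "b \<in> C a" and x: "x \<in> R b" and g: "g \<in> \<Lambda>" and y: "y \<in> R g"
  shows "br x y \<in> L_class sm G br phi H a"
proof -
  let ?d = "add_form (sh b 1) (sh g 1)"
  have xy: "br x y \<in> R ?d" by (rule bracket_root_spaces[OF x y])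
  have bL: "b \<in> \<Lambda>" using b root_class_iff by blast
  consider "br x y = 0" | "?d = (\<lambda>_. 0)" | "br x y \<noteq> 0" "?d \<in> \<Lambda>"
    using zero_or_root[OF xy] add_form_dual shift_1_dual root_dual bL g by blast
  then show ?thesis
  proof cases
    case 1
    then show ?thesis using subspace_0[OF subspace_L_class] by simp
  next
    case 2
    then have "g = neg_form b"
      using shift_add_form_eq_zero root_dual bL g by blast
    then have "br x y \<in> brackets_class a"
      unfolding brackets_def using b x y by blast
    then show ?thesis using brackets_class_subset_L_class by blast
  next
    case 3
    then have "?d \<in> C a"
      using root_class_trans[OF b] connected_sum_of_shifts[OF bL g] by blast
    then show ?thesis
      using xy root_vectors_class_subset_L_class by blast
  qed
qed

lemma bracket_brackets_class_root_vector:
  assumes b: "b \<in> C a" and u: "u \<in> R b" and w: "w \<in> R (neg_form b)"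
    and g: "g \<in> \<Lambda>" and y: "y \<in> R g"
  shows "br (br u w) y \<in> L_class sm G br phi H a"
proof -
  have bL: "b \<in> \<Lambda>" using b root_class_iff by blast
  have "br (br u w) y \<in> R (add_form (sh (\<lambda>_. 0) 1) (sh g 1))"
    by (rule bracket_root_spaces[OF bracket_opposite_root_spaces[OF u w] y])
  then have uwy: "br (br u w) y \<in> R (sh g 1)"
    by (simp add: shift_zero)
  show ?thesis
  proof (cases "sh g 1 \<in> C a")
    case True
    then show ?thesis using uwy root_vectors_class_subset_L_class by blast
  next
    case False
    text \<open>Both inner brackets of the Jacobi identity would connect \<open>\<gamma>\<phi>\<^sup>-\<^sup>1\<close> to \<open>\<beta>\<close>.\<close>
    then have not_connected: "\<not> connected sm G br phi H (sh g 1) b"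
      using root_class_trans[OF b shift_1_root[OF g]] by blast
    define y' where "y' = inv phi y"
    have y': "y' \<in> R (unshift g)" "sh (unshift g) 1 = g"
      unfolding y'_def using inv_phi_root_space[OF y] shift_unshift root_outside[OF g] by blast+
    have "br (hcomp w c) (hcomp y' e) = 0" for c e
    proof (rule ccontr)
      assume "br (hcomp w c) (hcomp y' e) \<noteq> 0"
      moreover have "br (hcomp w c) (hcomp y' e) \<in> R (add_form g (sh (neg_form b) 1))"
        using bracket_root_spaces[OF hcomp_root_space[OF w] hcomp_root_space[OF y'(1)]] y'(2)
        by (simp add: add_form_commute)
      ultimately have "connected sm G br phi H (sh g 1) (neg_form b)"
        by (intro connected_shift_if_bracket_nonzero[OF neg_root[OF bL] g])
      then show False
        using not_connected connected_neg_form_iff by blast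
    qed
    moreover have "br (hcomp y' e) (hcomp u c) = 0" for c e
    proof (rule ccontr)
      assume "br (hcomp y' e) (hcomp u c) \<noteq> 0"
      moreover have "br (hcomp y' e) (hcomp u c) \<in> R (add_form g (sh b 1))"
        using bracket_root_spaces[OF hcomp_root_space[OF y'(1)] hcomp_root_space[OF u]] y'(2) by simp
      ultimately show False
        using not_connected connected_shift_if_bracket_nonzero[OF bL g] by blast
    qed
    ultimately have "br (br u w) (phi y') = 0"
      by (rule hom_jacobi_vanishing)
    then show ?thesis
      using subspace_0[OF subspace_L_class] by (simp add: y'_def)
  qed
qed

lemma bracket_L_class:
  assumes x: "x \<in> L_class sm G br phi H a"
  shows "br x y \<in> L_class sm G br phi H a"
proof (rule bracket_span_span[OF subspace_L_class _ x[unfolded L_class_eq_span] split_span])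
  fix x y
  assume x: "x \<in> brackets_class a \<union> root_vectors_class a" and y: "y \<in> H \<union> (\<Union>g\<in>\<Lambda>. R g)"
  consider b where "b \<in> C a" "x \<in> R b"
    | b u w where "b \<in> C a" "u \<in> R b" "w \<in> R (neg_form b)" "x = br u w"
    using x unfolding brackets_def by blast
  then show "br x y \<in> L_class sm G br phi H a"
  proof cases
    case 1
    then show ?thesis
      using y bracket_root_vector_H bracket_root_vector_root_vector by blast
  next
    case 2
    then have "x \<in> H"
      using bracket_opposite_root_spaces root_space_zero_subset_H by blast
    then show ?thesis
      using y 2 bracket_H_H subspace_0[OF subspace_L_class] bracket_brackets_class_root_vector
      by fastforce
  qed
qed

theorem ideal_L_class: "hlc_ideal sm G br phi (L_class sm G br phi H a)"
  unfolding hlc_ideal_def using graded_L_class bracket_L_class phi_image_L_class by blast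

subsection \<open>Simple algebras\<close>

lemma L_class_decomp:
  assumes "v \<in> L_class sm G br phi H a"
  obtains p F w where "p \<in> span (brackets_class a)" "finite F" "F \<subseteq> C a"
    "\<forall>c\<in>F. w c \<in> R c" "v = p + sum w F"
proof -
  obtain p q where "p \<in> span (brackets_class a)" "q \<in> span (root_vectors_class a)" "v = p + q"
    using assms unfolding L_class_eq_span span_Un by blast
  moreover obtain F w where "finite F" "F \<subseteq> C a" "\<forall>c\<in>F. w c \<in> R c" "q = sum w F"
    using span_root_spaces_decomp[OF \<open>q \<in> span (root_vectors_class a)\<close>] by blast
  ultimately show ?thesis
    using that by blast
qed

lemma span_brackets_class_subset_H: "span (brackets_class a) \<subseteq> H"
  using span_minimal[OF brackets_class_subset_H subspace_H] .

lemma root_class_subset_roots: "C a \<subseteq> \<Lambda>"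
  using root_class_iff by blast

lemma root_class_if_root_vector_in_L_class:
  assumes v: "v \<in> L_class sm G br phi H a" "v \<in> R b" "v \<noteq> 0" and b: "b \<in> \<Lambda>"
  shows "b \<in> C a"
proof (rule ccontr)
  assume "b \<notin> C a"
  obtain p F w where d: "p \<in> span (brackets_class a)" "finite F" "F \<subseteq> C a"
    "\<forall>c\<in>F. w c \<in> R c" "v = p + sum w F"
    using L_class_decomp[OF v(1)] by blast
  text \<open>Put \<open>p \<in> H \<subseteq> L\<^sub>0\<close> in the slot of the zero form, which is not a root.\<close>
  define w' where "w' = w((\<lambda>_. 0) := p)"
  have zero_notin: "(\<lambda>_. 0) \<notin> F"
    using d(3) root_class_subset_roots root_nonzero by blast
  have "sum w' F = sum w F"
    using zero_notin by (intro sum.cong) (auto simp: w'_def)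
  then have sum_eq: "v = sum w' (insert (\<lambda>_. 0) F)"
    using d(2,5) zero_notin by (simp add: w'_def)
  have "v = 0"
  proof (rule root_space_inter_sum[OF _ _ _ root_dual[OF b] _ v(2) sum_eq])
    show "finite (insert (\<lambda>_. 0) F)" using d(2) by simp
    show "insert (\<lambda>_. 0) F \<subseteq> H0dual sm G H"
      using d(3) root_class_subset_roots root_dual zero_dual by blast
    show "\<forall>c\<in>insert (\<lambda>_. 0) F. w' c \<in> R c"
      using d(1,4) span_brackets_class_subset_H H_subset_root_space_zero by (auto simp: w'_def)
    show "b \<notin> insert (\<lambda>_. 0) F"
      using \<open>b \<notin> C a\<close> d(3) root_nonzero[OF b] by blast
  qed
  then show False using v(3) by contradiction
qed

lemma H_inter_L_class:
  assumes h: "h \<in> L_class sm G br phi H a" "h \<in> H"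
  shows "h \<in> span (brackets_class a)"
proof -
  obtain p F w where d: "p \<in> span (brackets_class a)" "finite F" "F \<subseteq> C a"
    "\<forall>c\<in>F. w c \<in> R c" "h = p + sum w F"
    using L_class_decomp[OF h(1)] by blast
  have "h - p = 0"
  proof (rule root_space_inter_sum[OF d(2) _ d(4) zero_dual])
    show "F \<subseteq> H0dual sm G H" using d(3) root_class_subset_roots root_dual by blast
    show "(\<lambda>_. 0) \<notin> F" using d(3) root_class_subset_roots root_nonzero by blast
    show "h - p \<in> R (\<lambda>_. 0)"
      using d(1) h(2) span_brackets_class_subset_H H_subset_root_space_zero subspace_root_space
      by (blast intro: subspace_diff)
    show "h - p = sum w F" using d(5) by simp
  qed
  then show ?thesis using d(1) by simp
qed

lemma L_class_eq_UNIV: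
  assumes simple: "hlc_simple sm G br phi" and a: "a \<in> \<Lambda>"
  shows "L_class sm G br phi H a = UNIV"
proof -
  obtain x where "x \<in> R a" "x \<noteq> 0" using root_vector[OF a] by blast
  moreover have "a \<in> C a" using a connected_refl root_class_iff by blast
  ultimately have "L_class sm G br phi H a \<noteq> {0}"
    using root_vectors_class_subset_L_class by blast
  then show ?thesis
    using simple ideal_L_class unfolding hlc_simple_def by blast
qed

lemma roots_nonempty:
  assumes "hlc_simple sm G br phi"
  shows "\<Lambda> \<noteq> {}"
proof
  assume "\<Lambda> = {}"
  then have "v \<in> H" for v
    using split_span[of v] by (simp add: span_eq_iff[THEN iffD2, OF subspace_H])
  then show False
    using assms bracket_H_H unfolding hlc_simple_def by blast
qed

theorem simple_connected:
  assumes "hlc_simple sm G br phi" "a \<in> \<Lambda>" "b \<in> \<Lambda>"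
  shows "connected sm G br phi H a b"
proof -
  obtain v where "v \<in> R a" "v \<noteq> 0" using root_vector[OF assms(2)] by blast
  then have "a \<in> C b"
    using root_class_if_root_vector_in_L_class L_class_eq_UNIV[OF assms(1,3)] assms(2) by blast
  then show ?thesis
    using root_class_iff by blast
qed

theorem simple_H_eq_span_brackets:
  assumes simple: "hlc_simple sm G br phi"
  shows "H = span (\<Union>a\<in>\<Lambda>. brackets br (R a) (R (neg_form a)))"
proof
  show "span (\<Union>a\<in>\<Lambda>. brackets br (R a) (R (neg_form a))) \<subseteq> H"
    by (intro span_minimal subspace_H)
      (auto simp: brackets_def intro: root_space_zero_subset_H bracket_opposite_root_spaces)
next
  obtain a where a: "a \<in> \<Lambda>" using roots_nonempty[OF simple] by blast
  have "H \<subseteq> span (brackets_class a)"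
    using H_inter_L_class L_class_eq_UNIV[OF simple a] by blast
  also have "\<dots> \<subseteq> span (\<Union>a\<in>\<Lambda>. brackets br (R a) (R (neg_form a)))"
    using root_class_subset_roots by (intro span_mono) blast
  finally show "H \<subseteq> span (\<Union>a\<in>\<Lambda>. brackets br (R a) (R (neg_form a)))" .
qed

end

theorem mainTheorem9:
  fixes sm :: "'k::field \<Rightarrow> 'v::ab_group_add \<Rightarrow> 'v"
    and G :: "'g::ab_group_add \<Rightarrow> 'v set"
    and br :: "'v \<Rightarrow> 'v \<Rightarrow> 'v"
    and phi :: "'v \<Rightarrow> 'v"
    and eps :: "'g \<Rightarrow> 'g \<Rightarrow> 'k"
    and H :: "'v set"
  assumes "hom_lie_color sm G br phi eps"
    and "bij phi"
    and "max_abelian_subalgebra sm G br phi H"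
    and "split_hlc sm G br phi H"
    and "symmetric_roots sm G br phi H"
  shows "(\<forall>\<alpha>\<in>roots sm G br phi H. hlc_ideal sm G br phi (L_class sm G br phi H \<alpha>)) \<and>
         (hlc_simple sm G br phi \<longrightarrow>
            (\<forall>\<alpha>\<in>roots sm G br phi H. \<forall>\<beta>\<in>roots sm G br phi H. connected sm G br phi H \<alpha> \<beta>) \<and>
            H = module.span sm (\<Union>\<alpha>\<in>roots sm G br phi H.
                   brackets br (root_space sm G br phi H \<alpha>) (root_space sm G br phi H (neg_form \<alpha>))))"
proof -
  have "abelian_subalgebra sm G br phi H"
    using assms(3) unfolding max_abelian_subalgebra_def by blast
  then interpret split_regular_hom_lie_color sm G br phi eps H
    using assms by unfold_locales
  show ?thesis
    using ideal_L_class simple_connected simple_H_eq_span_brackets by blast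
qed

end
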